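(* Let $\Psi_n$ be a real $K\times K$ matrix and $c\in(0,1)$. For every integer $s$ with $1\le s\le K/2$ and every $1<p\le2$, $$\kappa_{p,J}\ge C(p)\,s^{-1/p}\,\kappa_{\rm RE}(2s)\qquad\text{for all }J\subseteq\{1,\dots,K\}\text{ with }|J|\le s,$$ where $C(p)=2^{-1/p-1/2}(1-c)\Big(1+\frac{1+c}{1-c}(p-1)^{-1/p}\Big)^{-1}$.
   Context: $\Delta_J$ zeroes coordinates outside $J$, $J^c$ complement. $C_J=\{\Delta\in\mathbb R^K:|\Delta_{J^c}|_1\le\frac{1+c}{1-c}|\Delta_J|_1\}$; $\kappa_{p,J}=\inf\{|\Psi_n\Delta|_\infty:\Delta\in C_J,|\Delta|_p=1\}$. $\kappa_{{\rm RE},J}=\inf_{\Delta\in C_J\setminus\{0\}}\frac{|\Delta^T\Psi_n\Delta|}{|\Delta_J|_2^2}$ (ratio with zero denominator is $+\infty$) and $\kappa_{\rm RE}(m)=\min_{|J|\le m}\kappa_{{\rm RE},J}$. *)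

theory Defs
  imports "HOL-Analysis.Analysis" "HOL-Library.Extended_Real"
begin

text \<open>Vectors in R^K are modelled as real^'n with K = CARD('n); the index set
 {1..K} is UNIV :: 'n set.\<close>

definition restr :: "'n::finite set \<Rightarrow> real^'n \<Rightarrow> real^'n" where
  "restr J x = (\<chi> i. if i \<in> J then x $ i else 0)"

definition lpnorm :: "real \<Rightarrow> real^'n::finite \<Rightarrow> real" where
  "lpnorm p x = (\<Sum>i\<in>UNIV. \<bar>x $ i\<bar> powr p) powr (1 / p)"

definition l1norm :: "real^'n::finite \<Rightarrow> real" where
  "l1norm x = (\<Sum>i\<in>UNIV. \<bar>x $ i\<bar>)"

definition supnorm :: "real^'n::finite \<Rightarrow> real" where
  "supnorm x = Max (range (\<lambda>i. \<bar>x $ i\<bar>))"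

definition cone :: "real \<Rightarrow> 'n::finite set \<Rightarrow> (real^'n) set" where
  "cone c J = {x. l1norm (restr (- J) x) \<le> (1 + c) / (1 - c) * l1norm (restr J x)}"

text \<open>kappa_{p,J}; the infimum is taken in the extended reals (inf of empty set = +infinity).\<close>
definition kappa_p :: "real^'n^'n::finite \<Rightarrow> real \<Rightarrow> real \<Rightarrow> 'n set \<Rightarrow> ereal" where
  "kappa_p Psi c p J =
     Inf {ereal (supnorm (Psi *v x)) | x. x \<in> cone c J \<and> lpnorm p x = 1}"

definition kappa_RE_J :: "real^'n^'n::finite \<Rightarrow> real \<Rightarrow> 'n set \<Rightarrow> ereal" where
  "kappa_RE_J Psi c J =
     Inf ((\<lambda>x. if (\<Sum>i\<in>UNIV. (restr J x $ i)^2) = 0 then \<infinity>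
               else ereal (\<bar>x \<bullet> (Psi *v x)\<bar> / (\<Sum>i\<in>UNIV. (restr J x $ i)^2)))
          ` (cone c J - {0}))"

text \<open>kappa_RE(m) = min over |J| <= m (finitely many J, so min = Inf).\<close>
definition kappa_RE :: "real^'n^'n::finite \<Rightarrow> real \<Rightarrow> nat \<Rightarrow> ereal" where
  "kappa_RE Psi c m = Inf {kappa_RE_J Psi c J | J. card J \<le> m}"

definition Cp :: "real \<Rightarrow> real \<Rightarrow> real" where
  "Cp c p = 2 powr (- 1 / p - 1 / 2) * (1 - c) *
            inverse (1 + (1 + c) / (1 - c) * (p - 1) powr (- 1 / p))"

end

theory Submission
  imports Defs
begin

(* Fix x in the cone over J with |x|_p = 1; we must bound |Psi x|_inf from below.
   Let A and L be the l1-masses of x on J and off J, so L <= r A with r = (1+c)/(1-c).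
   Add to J the at most s entries outside J exceeding L/s; the resulting J' has |J'| <= 2s,
   x lies in the cone over J', and so kappa_RE(2s) <= |x . Psi x| / Q with Q = |x_J'|_2^2.
   Hoelder gives |x . Psi x| <= |x|_1 |Psi x|_inf <= (1+r) A |Psi x|_inf, hence it remains to
   show C(p) s^(-1/p) (1+r) A <= Q. This is a scalar inequality: splitting 1 = |x|_p^p into
   the part on J' (power-mean inequality) and the part off J' (entries at most L/s), and
   using Cauchy-Schwarz A^2 <= s Q, one gets 2^(1/2-1/p) s^(-1/p) A <= (1+r) Q. *)

text \<open>Superadditivity of t ^ p on [0, oo) for p >= 1, normalised to 1 + r^p <= (1 + r)^p;
  it merges the head and tail contributions into a single p-th power.\<close>
lemma one_plus_powr_le:
  fixes r p :: real assumes "0 \<le> r" "1 \<le> p"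
  shows "1 + r powr p \<le> (1 + r) powr p"
proof -
  have split: "(1 + r) powr p = (1 + r) powr (p - 1) * (1 + r)"
    using powr_add[of "1 + r" "p - 1" 1] assms by simp
  have r_split: "r powr p = r powr (p - 1) * r"
    using powr_add[of r "p - 1" 1] assms by (cases "r = 0") auto
  have "1 \<le> (1 + r) powr (p - 1)" using assms by (simp add: ge_one_powr_ge_zero)
  moreover have "r powr (p - 1) \<le> (1 + r) powr (p - 1)" using assms by (intro powr_mono2) auto
  ultimately have "1 + r powr (p - 1) * r \<le> (1 + r) powr (p - 1) + (1 + r) powr (p - 1) * r"
    using assms by (intro add_mono mult_right_mono) auto
  then show ?thesis using split r_split by (simp add: algebra_simps)
qed

lemma square_powr_half:
  fixes y p :: real shows "(y^2) powr (p/2) = \<bar>y\<bar> powr p"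
proof -
  have "y^2 = \<bar>y\<bar> powr 2" by (simp add: powr_numeral)
  then have "(y^2) powr (p/2) = (\<bar>y\<bar> powr 2) powr (p/2)" by simp
  also have "\<dots> = \<bar>y\<bar> powr p" by (subst powr_powr) simp
  finally show ?thesis .
qed

text \<open>Proved termwise from Young's inequality; it bounds the head of x on J'.\<close>
lemma sum_powr_le_power_mean:
  fixes y :: "'a \<Rightarrow> real" and p :: real
  assumes fin: "finite A" and p1: "1 < p" and p2: "p \<le> 2"
  shows "(\<Sum>i\<in>A. \<bar>y i\<bar> powr p) \<le> real (card A) powr (1 - p/2) * (\<Sum>i\<in>A. (y i)^2) powr (p/2)"
proof (cases "(\<Sum>i\<in>A. (y i)^2) = 0")
  case True
  then have "\<forall>i\<in>A. y i = 0" using fin by (simp add: sum_nonneg_eq_0_iff)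
  then show ?thesis by simp
next
  case False
  define Q where "Q = (\<Sum>i\<in>A. (y i)^2)"
  define m where "m = real (card A)"
  have Q0: "0 < Q" using False by (simp add: Q_def order_less_le sum_nonneg)
  have m0: "0 < m" using Q0 fin by (auto simp: m_def Q_def card_gt_0_iff)
  define t where "t = Q / m"
  have t0: "0 < t" using Q0 m0 by (simp add: t_def)
  have young: "\<bar>y i\<bar> powr p \<le> t powr (p/2) * ((p/2) * ((y i)^2 / t) + (1 - p/2))" for i
  proof (cases "y i = 0")
    case True then show ?thesis using p2 t0 by simp
  next
    case False
    have "((y i)^2 / t) powr (p/2) * 1 powr (1 - p/2) \<le> (p/2) * ((y i)^2 / t) + (1 - p/2) * 1"
      by (rule Youngs_inequality_0) (use p1 p2 t0 False in auto)
    moreover have "((y i)^2) powr (p/2) = \<bar>y i\<bar> powr p" by (rule square_powr_half)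
    ultimately have "\<bar>y i\<bar> powr p / t powr (p/2) \<le> (p/2) * ((y i)^2 / t) + (1 - p/2)"
      using t0 by (simp add: powr_divide)
    then show ?thesis using t0 by (simp add: divide_le_eq mult.commute)
  qed
  have "(\<Sum>i\<in>A. \<bar>y i\<bar> powr p) \<le> (\<Sum>i\<in>A. t powr (p/2) * ((p/2) * ((y i)^2 / t) + (1 - p/2)))"
    by (rule sum_mono) (rule young)
  also have "\<dots> = t powr (p/2) * (\<Sum>i\<in>A. (p/2) / t * (y i)^2 + (1 - p/2))"
    by (subst sum_distrib_left) (simp add: algebra_simps)
  also have "(\<Sum>i\<in>A. (p/2) / t * (y i)^2 + (1 - p/2)) = (p/2) / t * Q + (1 - p/2) * m"
    by (simp add: sum.distrib Q_def m_def mult.commute sum_distrib_left)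
  also have "(p/2) / t * Q + (1 - p/2) * m = m"
    using t0 m0 by (simp add: t_def field_simps)
  also have "t powr (p/2) * m = m powr (1 - p/2) * Q powr (p/2)"
    using t0 m0 by (simp add: t_def powr_divide field_simps flip: powr_add)
  finally show ?thesis by (simp add: Q_def m_def)
qed

lemma sum_powr_le_max_times_sum:
  fixes f :: "'a \<Rightarrow> real"
  assumes "\<And>i. i \<in> B \<Longrightarrow> 0 \<le> f i" "\<And>i. i \<in> B \<Longrightarrow> f i \<le> t" "1 \<le> p"
  shows "(\<Sum>i\<in>B. f i powr p) \<le> t powr (p - 1) * (\<Sum>i\<in>B. f i)"
  unfolding sum_distrib_left
proof (rule sum_mono)
  fix i assume i: "i \<in> B"
  have "f i powr p = f i powr (p - 1) * f i"
    using powr_add[of "f i" "p - 1" 1] assms(1)[OF i] by (cases "f i = 0") auto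
  also have "\<dots> \<le> t powr (p - 1) * f i"
    using assms i by (intro mult_right_mono powr_mono2) auto
  finally show "f i powr p \<le> t powr (p - 1) * f i" .
qed

text \<open>Markov-type counting: at most s terms of a nonnegative sum exceed a 1/s fraction of it.
  This is why adding the large entries outside J costs at most s indices.\<close>
lemma card_large_terms_le:
  fixes f :: "'a \<Rightarrow> real" and s :: nat
  assumes "finite B" "\<And>i. i \<in> B \<Longrightarrow> 0 \<le> f i" "1 \<le> s"
  shows "card {i \<in> B. sum f B / s < f i} \<le> s"
proof -
  define T where "T = {i \<in> B. sum f B / s < f i}"
  have "real (card T) * (sum f B / s) \<le> sum f T"
    by (rule sum_bounded_below) (simp add: T_def)
  also have "\<dots> \<le> sum f B" using assms by (intro sum_mono2) (auto simp: T_def)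
  finally have bound: "real (card T) * sum f B \<le> real s * sum f B"
    using assms(3) by (simp add: field_simps)
  show ?thesis
  proof (cases "sum f B = 0")
    case True
    then have "T = {}" using assms by (auto simp: T_def sum_nonneg_eq_0_iff)
    then show ?thesis by (metis T_def card.empty zero_le)
  next
    case False
    then have "0 < sum f B" using assms by (simp add: order_less_le sum_nonneg)
    then show ?thesis using bound by (simp add: T_def)
  qed
qed

text \<open>Solving the head/tail inequality for u = (Q/s)^(1/2): taking p-th roots, with
  2^(p/2-1) <= 1 and 1 + r^p <= (1 + r)^p.\<close>
lemma root_of_head_tail_bound:
  fixes u s r p :: real
  assumes u0: "0 \<le> u" and s1: "1 \<le> s" and r0: "0 \<le> r" and p1: "1 < p" and p2: "p \<le> 2"
    and key: "1 \<le> s * u powr p * (2 powr (1 - p/2) + r powr p)"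
  shows "2 powr (1/2 - 1/p) \<le> (1 + r) * s powr (1/p) * u"
proof -
  have "2 powr (p/2 - 1) \<le> 2 powr (p/2 - 1) * (s * u powr p * (2 powr (1 - p/2) + r powr p))"
    using key by simp
  also have "\<dots> = s * u powr p * (2 powr (p/2 - 1) * 2 powr (1 - p/2) + 2 powr (p/2 - 1) * r powr p)"
    by (simp add: algebra_simps)
  also have "2 powr (p/2 - 1) * 2 powr (1 - p/2) = 1" by (simp flip: powr_add)
  also have "s * u powr p * (1 + 2 powr (p/2 - 1) * r powr p) \<le> s * u powr p * (1 + r powr p)"
  proof -
    have "2 powr (p/2 - 1) \<le> 1" using powr_mono[of "p/2 - 1" 0 2] p2 by simp
    then have "2 powr (p/2 - 1) * r powr p \<le> r powr p" by (simp add: mult_left_le_one_le)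
    then show ?thesis using s1 u0 by (intro mult_left_mono) auto
  qed
  also have "\<dots> \<le> s * u powr p * (1 + r) powr p"
    using one_plus_powr_le[of r p] r0 p1 s1 u0 by (intro mult_left_mono) auto
  also have "\<dots> = ((1 + r) * s powr (1/p) * u) powr p"
    using p1 s1 r0 u0 by (simp add: powr_mult powr_powr)
  finally have "(2 powr (p/2 - 1)) powr (1/p) \<le> (((1 + r) * s powr (1/p) * u) powr p) powr (1/p)"
    using p1 by (intro powr_mono2) auto
  moreover have "(p/2 - 1) * (1/p) = 1/2 - 1/p" using p1 by (simp add: field_simps)
  ultimately show ?thesis using p1 s1 r0 u0 by (simp add: powr_powr)
qed

text \<open>A = l1-mass of x on J, L = l1-mass off J, Q = l2-mass
  on J', m = |J'|. From the cone condition L <= r A, Cauchy-Schwarz A^2 <= s Q, and the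
  normalisation 1 <= (head) + (tail) we get 2^(1/2-1/p) s^(-1/p) A <= (1 + r) Q.\<close>
lemma scalar_inequality:
  fixes s p r Q A L m :: real
  assumes s1: "1 \<le> s" and p1: "1 < p" and p2: "p \<le> 2" and r0: "0 \<le> r"
    and Q0: "0 \<le> Q" and A0: "0 \<le> A" and L0: "0 \<le> L" and LA: "L \<le> r * A"
    and AQ: "A^2 \<le> s * Q" and m0: "0 \<le> m" and ms: "m \<le> 2 * s"
    and unit: "1 \<le> m powr (1 - p/2) * Q powr (p/2) + (L/s) powr (p - 1) * L"
  shows "2 powr (1/2 - 1/p) * s powr (-1/p) * A \<le> (1 + r) * Q"
proof -
  define u where "u = sqrt (Q / s)"
  have u0: "0 \<le> u" using Q0 s1 by (simp add: u_def)
  have Qu: "Q = s * u^2" using Q0 s1 by (simp add: u_def)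
  have "A^2 \<le> (s * u)^2" using AQ by (simp add: Qu power2_eq_square ac_simps)
  then have A_le: "A \<le> s * u" by (rule power2_le_imp_le) (use s1 u0 in simp)
  have L_le: "L \<le> r * (s * u)" using LA A_le r0 by (meson mult_left_mono order_trans)
  have head: "m powr (1 - p/2) * Q powr (p/2) \<le> 2 powr (1 - p/2) * s * u powr p"
  proof -
    have "m powr (1 - p/2) * Q powr (p/2) \<le> (2 * s) powr (1 - p/2) * Q powr (p/2)"
      using m0 ms p2 by (intro mult_right_mono powr_mono2) auto
    also have "\<dots> = 2 powr (1 - p/2) * (s powr (1 - p/2) * s powr (p/2)) * u powr p"
      using s1 u0 by (simp add: Qu powr_mult square_powr_half)
    also have "s powr (1 - p/2) * s powr (p/2) = s" using s1 by (simp flip: powr_add)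
    finally show ?thesis .
  qed
  have tail: "(L/s) powr (p - 1) * L \<le> s * (r * u) powr p"
  proof -
    have "(L/s) powr (p - 1) * L \<le> (r * u) powr (p - 1) * (r * u * s)"
      using L_le s1 L0 p1 by (intro mult_mono powr_mono2) (auto simp: field_simps)
    also have "(r * u) powr (p - 1) * (r * u) = (r * u) powr p"
      using powr_add[of "r * u" "p - 1" 1] r0 u0 by (cases "r * u = 0") auto
    then have "(r * u) powr (p - 1) * (r * u * s) = s * (r * u) powr p" by (simp add: algebra_simps)
    finally show ?thesis .
  qed
  have "1 \<le> s * u powr p * (2 powr (1 - p/2) + r powr p)"
    using unit head tail r0 u0 by (simp add: powr_mult algebra_simps)
  then have root: "2 powr (1/2 - 1/p) \<le> (1 + r) * s powr (1/p) * u"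
    using root_of_head_tail_bound u0 s1 r0 p1 p2 by blast
  have "2 powr (1/2 - 1/p) * s powr (-1/p) * A \<le> 2 powr (1/2 - 1/p) * s powr (-1/p) * (s * u)"
    using A_le by (intro mult_left_mono) auto
  also have "\<dots> \<le> (1 + r) * s powr (1/p) * u * s powr (-1/p) * (s * u)"
    using root s1 u0 by (intro mult_right_mono) auto
  also have "\<dots> = (1 + r) * (s powr (1/p) * s powr (-1/p)) * (s * u^2)"
    by (simp add: power2_eq_square algebra_simps)
  also have "s powr (1/p) * s powr (-1/p) = 1" using s1 by (simp flip: powr_add)
  finally show ?thesis using Qu by simp
qed

text \<open>The constant C(p): it is nonnegative, and since (1-c)(1+r) = 2 and (p-1)^(-1/p) >= 1
  it satisfies C(p) (1+r)^2 <= 2^(1/2-1/p), which is all the proof needs from it.\<close>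
lemma Cp_bound:
  fixes c p :: real
  defines "r \<equiv> (1 + c) / (1 - c)"
  assumes "0 < c" "c < 1" "1 < p" "p \<le> 2"
  shows "0 \<le> Cp c p" "Cp c p * (1 + r) * (1 + r) \<le> 2 powr (1/2 - 1/p)"
proof -
  define a where "a = r * (p - 1) powr (- 1 / p)"
  have r0: "0 \<le> r" using assms by (simp add: r_def)
  have "1 powr (- 1 / p) \<le> (p - 1) powr (- 1 / p)" using assms by (intro powr_mono2') auto
  then have ra: "r \<le> a" unfolding a_def using r0 by (simp add: mult_le_cancel_left1)
  have two: "(1 - c) * (1 + r) = 2" using assms by (simp add: r_def field_simps)
  have Cp_eq: "Cp c p = 2 powr (- 1 / p - 1 / 2) * (1 - c) / (1 + a)"
    unfolding Cp_def a_def r_def by (simp only: divide_inverse)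
  have "0 < 1 + a" using r0 ra by simp
  then show "0 \<le> Cp c p" unfolding Cp_eq using assms by simp
  have "Cp c p * (1 + r) * (1 + r) = 2 powr (- 1 / p - 1 / 2) * ((1 - c) * (1 + r)) * ((1 + r) / (1 + a))"
    unfolding Cp_eq by (simp add: mult_ac)
  also have "\<dots> = 2 powr (- 1 / p - 1 / 2) * 2 * ((1 + r) / (1 + a))"
    by (simp only: two)
  also have "\<dots> \<le> 2 powr (- 1 / p - 1 / 2) * 2 * 1"
    using r0 ra by (intro mult_left_mono) auto
  also have "\<dots> = 2 powr (1/2 - 1/p)"
    using powr_add[of 2 "- 1 / p - 1 / 2" 1] by simp
  finally show "Cp c p * (1 + r) * (1 + r) \<le> 2 powr (1/2 - 1/p)" .
qed

lemma sum_restr: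
  assumes "g 0 = 0"
  shows "(\<Sum>i\<in>UNIV. g (restr J x $ i)) = (\<Sum>i\<in>J. g (x $ i))"
  using assms by (simp add: restr_def if_distrib sum.If_cases)

lemma l1norm_restr: "l1norm (restr J x) = (\<Sum>i\<in>J. \<bar>x $ i\<bar>)"
  unfolding l1norm_def by (rule sum_restr) simp

lemma sum_UNIV_split:
  fixes f :: "'n::finite \<Rightarrow> real"
  shows "sum f UNIV = sum f J + sum f (- J)"
  using sum.subset_diff[of J UNIV f] by (simp add: Compl_eq_Diff_UNIV)

lemma cone_mono:
  assumes "-1 \<le> c" "c < 1" "J \<subseteq> J'"
  shows "cone c J \<subseteq> cone c J'"
proof
  fix x assume "x \<in> cone c J"
  then have "(\<Sum>i\<in>-J. \<bar>x $ i\<bar>) \<le> (1 + c) / (1 - c) * (\<Sum>i\<in>J. \<bar>x $ i\<bar>)"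
    by (simp add: cone_def l1norm_restr)
  moreover have "(\<Sum>i\<in>-J'. \<bar>x $ i\<bar>) \<le> (\<Sum>i\<in>-J. \<bar>x $ i\<bar>)"
    using assms by (intro sum_mono2) auto
  moreover have "(1 + c) / (1 - c) * (\<Sum>i\<in>J. \<bar>x $ i\<bar>) \<le> (1 + c) / (1 - c) * (\<Sum>i\<in>J'. \<bar>x $ i\<bar>)"
    using assms by (intro mult_left_mono sum_mono2) auto
  ultimately show "x \<in> cone c J'" by (simp add: cone_def l1norm_restr)
qed

lemma abs_le_supnorm: "\<bar>y $ i\<bar> \<le> supnorm y"
  unfolding supnorm_def by (rule Max_ge) auto

lemma inner_le_l1norm_supnorm: "\<bar>x \<bullet> y\<bar> \<le> l1norm x * supnorm (y::real^'n::finite)"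
proof -
  have "\<bar>x \<bullet> y\<bar> = \<bar>\<Sum>i\<in>UNIV. x $ i * y $ i\<bar>" by (simp add: inner_vec_def)
  also have "\<dots> \<le> (\<Sum>i\<in>UNIV. \<bar>x $ i\<bar> * \<bar>y $ i\<bar>)" by (rule order_trans[OF sum_abs]) (simp add: abs_mult)
  also have "\<dots> \<le> (\<Sum>i\<in>UNIV. \<bar>x $ i\<bar> * supnorm y)"
    by (intro sum_mono mult_left_mono abs_le_supnorm) auto
  also have "\<dots> = l1norm x * supnorm y" by (simp add: l1norm_def sum_distrib_right)
  finally show ?thesis .
qed

lemma lpnorm_eq_1_imp:
  assumes "lpnorm p x = 1" "0 < p"
  shows "(\<Sum>i\<in>UNIV. \<bar>x $ i\<bar> powr p) = 1"
proof -
  have "((\<Sum>i\<in>UNIV. \<bar>x $ i\<bar> powr p) powr (1/p)) powr p = 1"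
    using assms by (simp add: lpnorm_def)
  then show ?thesis using assms by (simp add: powr_powr sum_nonneg)
qed

lemma kappa_RE_le_ratio:
  assumes "card J' \<le> m" "x \<in> cone c J'" "0 < (\<Sum>i\<in>J'. (x $ i)^2)"
  shows "kappa_RE Psi c m \<le> ereal (\<bar>x \<bullet> (Psi *v x)\<bar> / (\<Sum>i\<in>J'. (x $ i)^2))"
proof -
  have norm_J': "(\<Sum>i\<in>UNIV. (restr J' x $ i)^2) = (\<Sum>i\<in>J'. (x $ i)^2)"
    by (rule sum_restr) simp
  have "x \<noteq> 0" using assms(3) by auto
  then have "kappa_RE_J Psi c J' \<le> ereal (\<bar>x \<bullet> (Psi *v x)\<bar> / (\<Sum>i\<in>J'. (x $ i)^2))"
    unfolding kappa_RE_J_def using assms(2,3) norm_J'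
    by (intro Inf_lower2[OF imageI[of x]]) auto
  moreover have "kappa_RE Psi c m \<le> kappa_RE_J Psi c J'"
    unfolding kappa_RE_def by (rule Inf_lower) (use assms(1) in blast)
  ultimately show ?thesis by simp
qed

lemma support_enlargement:
  fixes x :: "real^'n::finite" and s :: nat
  assumes "card J \<le> s" "1 \<le> s"
  obtains J' where "J \<subseteq> J'" "card J' \<le> 2 * s"
    "\<And>i. i \<notin> J' \<Longrightarrow> \<bar>x $ i\<bar> \<le> (\<Sum>i\<in>-J. \<bar>x $ i\<bar>) / s"
proof
  define T where "T = {i \<in> -J. (\<Sum>i\<in>-J. \<bar>x $ i\<bar>) / s < \<bar>x $ i\<bar>}"
  have "card T \<le> s" unfolding T_def by (rule card_large_terms_le) (use assms in auto)
  then show "card (J \<union> T) \<le> 2 * s" using card_Un_le[of J T] assms(1) by linarith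
  show "\<bar>x $ i\<bar> \<le> (\<Sum>i\<in>-J. \<bar>x $ i\<bar>) / s" if "i \<notin> J \<union> T" for i
    using that by (auto simp: T_def)
qed simp

lemma head_tail_of_unit_vector:
  fixes x :: "real^'n::finite" and t p :: real
  assumes "lpnorm p x = 1" "1 < p" "p \<le> 2" "\<And>i. i \<notin> J' \<Longrightarrow> \<bar>x $ i\<bar> \<le> t"
  shows "1 \<le> real (card J') powr (1 - p/2) * (\<Sum>i\<in>J'. (x $ i)^2) powr (p/2)
              + t powr (p - 1) * (\<Sum>i\<in>-J'. \<bar>x $ i\<bar>)"
proof -
  have "1 = (\<Sum>i\<in>UNIV. \<bar>x $ i\<bar> powr p)" using lpnorm_eq_1_imp[OF assms(1)] assms(2) by simp
  also have "\<dots> = (\<Sum>i\<in>J'. \<bar>x $ i\<bar> powr p) + (\<Sum>i\<in>-J'. \<bar>x $ i\<bar> powr p)"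
    by (rule sum_UNIV_split)
  also have "(\<Sum>i\<in>J'. \<bar>x $ i\<bar> powr p) \<le> real (card J') powr (1 - p/2) * (\<Sum>i\<in>J'. (x $ i)^2) powr (p/2)"
    using assms by (intro sum_powr_le_power_mean) auto
  also have "(\<Sum>i\<in>-J'. \<bar>x $ i\<bar> powr p) \<le> t powr (p - 1) * (\<Sum>i\<in>-J'. \<bar>x $ i\<bar>)"
    using assms by (intro sum_powr_le_max_times_sum) auto
  finally show ?thesis by simp
qed

lemma enlarged_support:
  fixes x :: "real^'n::finite" and c p :: real and s :: nat
  assumes c: "0 < c" "c < 1" and s1: "1 \<le> s" and p: "1 < p" "p \<le> 2"
    and cardJ: "card J \<le> s" and x_cone: "x \<in> cone c J" and x_unit: "lpnorm p x = 1"
  obtains J' where "card J' \<le> 2 * s" "x \<in> cone c J'" "0 < (\<Sum>i\<in>J'. (x $ i)^2)"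
    "2 powr (1/2 - 1/p) * s powr (-1/p) * (\<Sum>i\<in>J. \<bar>x $ i\<bar>)
       \<le> (1 + (1 + c) / (1 - c)) * (\<Sum>i\<in>J'. (x $ i)^2)"
proof -
  define r where "r = (1 + c) / (1 - c)"
  define A where "A = (\<Sum>i\<in>J. \<bar>x $ i\<bar>)"
  define L where "L = (\<Sum>i\<in>-J. \<bar>x $ i\<bar>)"
  have r0: "0 \<le> r" using c by (simp add: r_def)
  have LA: "L \<le> r * A" using x_cone by (simp add: cone_def l1norm_restr A_def L_def r_def)
  obtain J' where JJ': "J \<subseteq> J'" and cardJ': "card J' \<le> 2 * s"
    and tail: "\<And>i. i \<notin> J' \<Longrightarrow> \<bar>x $ i\<bar> \<le> L / s"
    using support_enlargement[OF cardJ s1] unfolding L_def by blast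
  define Q where "Q = (\<Sum>i\<in>J'. (x $ i)^2)"
  have AQ: "A^2 \<le> s * Q"
  proof -
    have "A^2 \<le> (\<Sum>i\<in>J. \<bar>x $ i\<bar>^2) * card J" unfolding A_def by (rule sum_squared_le_sum_of_squares)
    also have "\<dots> \<le> Q * s"
    proof (rule mult_mono)
      show "(\<Sum>i\<in>J. \<bar>x $ i\<bar>^2) \<le> Q" unfolding Q_def using JJ' by (simp, intro sum_mono2) auto
    qed (use cardJ in \<open>auto simp: Q_def sum_nonneg\<close>)
    finally show ?thesis by (simp add: mult.commute)
  qed
  have "1 \<le> real (card J') powr (1 - p/2) * Q powr (p/2) + (L / s) powr (p - 1) * (\<Sum>i\<in>-J'. \<bar>x $ i\<bar>)"
    unfolding Q_def by (rule head_tail_of_unit_vector[OF x_unit p tail])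
  also have "(\<Sum>i\<in>-J'. \<bar>x $ i\<bar>) \<le> L" unfolding L_def using JJ' by (intro sum_mono2) auto
  finally have unit: "1 \<le> real (card J') powr (1 - p/2) * Q powr (p/2) + (L / s) powr (p - 1) * L"
    by (simp add: mult_left_mono)
  have Q0: "0 < Q"
  proof (rule ccontr)
    assume "\<not> 0 < Q"
    then have "Q = 0" by (simp add: Q_def sum_nonneg order_less_le)
    then have "L = 0" using AQ LA r0 by (simp add: A_def L_def sum_nonneg order_antisym)
    then show False using unit \<open>Q = 0\<close> by simp
  qed
  have "2 powr (1/2 - 1/p) * s powr (-1/p) * A \<le> (1 + r) * Q"
    by (rule scalar_inequality[OF _ p r0 _ _ _ LA AQ _ _ unit])
       (use s1 Q0 cardJ' in \<open>auto simp: A_def L_def sum_nonneg\<close>)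
  moreover have "x \<in> cone c J'" using cone_mono[OF _ c(2) JJ'] c x_cone by auto
  ultimately show thesis using that cardJ' Q0 by (simp add: A_def Q_def r_def)
qed

lemma kappa_bound_at_vector:
  fixes Psi :: "real^'n^'n::finite" and c p :: real and s :: nat and x :: "real^'n"
  assumes c: "0 < c" "c < 1" and s1: "1 \<le> s" and p: "1 < p" "p \<le> 2"
    and cardJ: "card J \<le> s" and x_cone: "x \<in> cone c J" and x_unit: "lpnorm p x = 1"
  shows "ereal (Cp c p * real s powr (- 1 / p)) * kappa_RE Psi c (2 * s) \<le> ereal (supnorm (Psi *v x))"
proof -
  define r where "r = (1 + c) / (1 - c)"
  define A where "A = (\<Sum>i\<in>J. \<bar>x $ i\<bar>)"
  obtain J' where cardJ': "card J' \<le> 2 * s" and x_cone': "x \<in> cone c J'"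
    and mass_pos: "0 < (\<Sum>i\<in>J'. (x $ i)^2)"
    and mass_bound: "2 powr (1/2 - 1/p) * s powr (-1/p) * A \<le> (1 + r) * (\<Sum>i\<in>J'. (x $ i)^2)"
    using enlarged_support[OF c s1 p cardJ x_cone x_unit] unfolding A_def r_def by blast
  define Q where "Q = (\<Sum>i\<in>J'. (x $ i)^2)"
  note Q0 = mass_pos[folded Q_def] and scalar = mass_bound[folded Q_def]
  have kappa: "kappa_RE Psi c (2 * s) \<le> ereal (\<bar>x \<bullet> (Psi *v x)\<bar> / Q)"
    unfolding Q_def by (rule kappa_RE_le_ratio[OF cardJ' x_cone' mass_pos])
  have sup0: "0 \<le> supnorm (Psi *v x)" using abs_le_supnorm[of "Psi *v x"] abs_ge_zero order_trans by blast
  have inner: "\<bar>x \<bullet> (Psi *v x)\<bar> \<le> (1 + r) * A * supnorm (Psi *v x)"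
  proof -
    have "l1norm x = A + (\<Sum>i\<in>-J. \<bar>x $ i\<bar>)" unfolding l1norm_def A_def by (rule sum_UNIV_split)
    moreover have "(\<Sum>i\<in>-J. \<bar>x $ i\<bar>) \<le> r * A"
      using x_cone by (simp add: cone_def l1norm_restr A_def r_def)
    ultimately have "l1norm x \<le> (1 + r) * A" by (simp add: algebra_simps)
    then show ?thesis using inner_le_l1norm_supnorm[of x "Psi *v x"] sup0
      by (meson mult_right_mono order_trans)
  qed
  define D where "D = Cp c p * real s powr (- 1 / p)"
  have D0: "0 \<le> D" using Cp_bound(1)[OF c p] by (simp add: D_def)
  have DA: "D * ((1 + r) * A) \<le> Q"
  proof -
    have "D * ((1 + r) * A) * (1 + r) = (Cp c p * (1 + r) * (1 + r)) * (s powr (-1/p) * A)"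
      by (simp add: D_def algebra_simps)
    also have "\<dots> \<le> 2 powr (1/2 - 1/p) * (s powr (-1/p) * A)"
      using Cp_bound(2)[OF c p] by (intro mult_right_mono) (auto simp: r_def A_def sum_nonneg)
    also have "\<dots> \<le> (1 + r) * Q" using scalar by (simp add: mult.assoc)
    finally have "D * ((1 + r) * A) * (1 + r) \<le> Q * (1 + r)" by (simp add: mult.commute)
    moreover have "0 < 1 + r" using c by (simp add: r_def add_pos_nonneg)
    ultimately show ?thesis by (simp add: mult.commute)
  qed
  have "D * \<bar>x \<bullet> (Psi *v x)\<bar> \<le> D * ((1 + r) * A) * supnorm (Psi *v x)"
    using mult_left_mono[OF inner D0] by (simp add: mult.assoc)
  also have "\<dots> \<le> Q * supnorm (Psi *v x)" using DA sup0 by (rule mult_right_mono)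
  finally have ratio: "D * (\<bar>x \<bullet> (Psi *v x)\<bar> / Q) \<le> supnorm (Psi *v x)"
    using Q0 by (simp add: divide_le_eq mult.commute)
  have "ereal D * kappa_RE Psi c (2 * s) \<le> ereal D * ereal (\<bar>x \<bullet> (Psi *v x)\<bar> / Q)"
    using kappa D0 by (intro ereal_mult_left_mono) auto
  also have "\<dots> \<le> ereal (supnorm (Psi *v x))" using ratio by simp
  finally show ?thesis by (simp add: D_def)
qed

theorem proposition5:
  fixes Psi :: "real^'n^'n" and c p :: real and s :: nat and J :: "'n set"
  assumes "0 < c" "c < 1"
    and "1 \<le> s" "2 * s \<le> CARD('n)"
    and "1 < p" "p \<le> 2"
    and "card J \<le> s"
  shows "kappa_p Psi c p J \<ge> ereal (Cp c p * real s powr (- 1 / p)) * kappa_RE Psi c (2 * s)"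
  unfolding kappa_p_def
proof (rule Inf_greatest, clarify)
  fix x assume "x \<in> cone c J" "lpnorm p x = 1"
  then show "ereal (Cp c p * real s powr (- 1 / p)) * kappa_RE Psi c (2 * s) \<le> ereal (supnorm (Psi *v x))"
    by (intro kappa_bound_at_vector[OF assms(1-3,5-7)])
qed

end
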